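(* Let $(\pi_1,S_1,T_1,W_1)$ be a linearly minimal homomorphism dilation system of a linear system $(\varphi,\mathcal A,V)$, and let $(\pi_c,S_c,T_c,W_c)$ be the canonical dilation. (i) If $\ker S_1$ contains no nonzero $\pi_1(\mathcal A)$-invariant subspace, then $(\pi_1,S_1,T_1,W_1)$ is equivalent to the canonical dilation. (ii) If $\dim W_1<\infty$ and $\pi_1$ is equivalent to $\pi_c$, in the sense that there is a bijective linear map $R:W_1\to W_c$ with $\pi_c(a)R=R\pi_1(a)$ for all $a\in\mathcal A$, then $\ker S_1$ contains no nonzero $\pi_1(\mathcal A)$-invariant subspace.
   Context: Fix a field $\mathbb F$; all algebras and vector spaces are over $\mathbb F$, and $L(X)$ is the algebra of linear maps $X\to X$. A linear system $(\varphi,\mathcal A,V)$: $\mathcal A$ a unital associative algebra with unit $I$, $V$ a vector space, $\varphi:\mathcal A\to L(V)$ linear with $\varphi(I)=\mathrm{id}_V$. A homomorphism dilation system $(\pi,S,T,W)$: $W$ a vector space, $\pi:\mathcal A\to L(W)$ a unital homomorphism, $T:V\to W$ injective linear, $S:W\to V$ surjective linear, $\varphi(a)=S\pi(a)T$ for all $a$. It is linearly minimal if $W=\mathrm{span}\{\pi(a)Tv\}$. Two linearly minimal systems are equivalent if there is a bijective linear $R:W_1\to W_2$ with $RT_1=T_2$, $S_2R=S_1$, $\pi_1(a)=R^{-1}\pi_2(a)R$ for all $a$. Canonical dilation: $\alpha_{a,x}\in L(\mathcal A,V)$, $\alpha_{a,x}(b)=\varphi(ba)x$; $W_c=\mathrm{span}\{\alpha_{a,x}:a\in\mathcal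 A,x\in V\}$; $\pi_c(a)\alpha_{b,x}=\alpha_{ab,x}$; $T_cx=\alpha_{I,x}$; $S_c(\alpha_{a,x})=\varphi(a)x$. *)

theory Defs
  imports Complex_Main "HOL-Library.Function_Algebras"
begin

(* A vector space is a type with
   ab_group_add structure together with a scalar multiplication satisfying
   the library locale vector_space. *)

definition unital_algebra :: "('f::field \<Rightarrow> 'a::ring_1 \<Rightarrow> 'a) \<Rightarrow> bool" where
  "unital_algebra sA \<longleftrightarrow> vector_space sA \<and>
     (\<forall>c x y. sA c (x * y) = sA c x * y \<and> sA c (x * y) = x * sA c y)"

definition linear_system ::
  "('f::field \<Rightarrow> 'a::ring_1 \<Rightarrow> 'a) \<Rightarrow> ('f \<Rightarrow> 'v::ab_group_add \<Rightarrow> 'v) \<Rightarrow> ('a \<Rightarrow> 'v \<Rightarrow> 'v) \<Rightarrow> bool" where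
  "linear_system sA sV \<phi> \<longleftrightarrow> unital_algebra sA \<and> vector_space sV \<and>
     (\<forall>a. Vector_Spaces.linear sV sV (\<phi> a)) \<and>
     (\<forall>a b x. \<phi> (a + b) x = \<phi> a x + \<phi> b x) \<and>
     (\<forall>c a x. \<phi> (sA c a) x = sV c (\<phi> a x)) \<and>
     \<phi> 1 = id"

definition hom_dilation_system ::
  "('f::field \<Rightarrow> 'a::ring_1 \<Rightarrow> 'a) \<Rightarrow> ('f \<Rightarrow> 'v::ab_group_add \<Rightarrow> 'v) \<Rightarrow> ('a \<Rightarrow> 'v \<Rightarrow> 'v)
   \<Rightarrow> ('f \<Rightarrow> 'w::ab_group_add \<Rightarrow> 'w) \<Rightarrow> ('a \<Rightarrow> 'w \<Rightarrow> 'w) \<Rightarrow> ('w \<Rightarrow> 'v) \<Rightarrow> ('v \<Rightarrow> 'w) \<Rightarrow> bool" where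
  "hom_dilation_system sA sV \<phi> sW \<pi> S T \<longleftrightarrow>
     linear_system sA sV \<phi> \<and> vector_space sW \<and>
     (\<forall>a. Vector_Spaces.linear sW sW (\<pi> a)) \<and>
     (\<forall>a b w. \<pi> (a + b) w = \<pi> a w + \<pi> b w) \<and>
     (\<forall>c a w. \<pi> (sA c a) w = sW c (\<pi> a w)) \<and>
     (\<forall>a b. \<pi> (a * b) = \<pi> a \<circ> \<pi> b) \<and>
     \<pi> 1 = id \<and>
     Vector_Spaces.linear sV sW T \<and> inj T \<and>
     Vector_Spaces.linear sW sV S \<and> surj S \<and>
     (\<forall>a. \<phi> a = S \<circ> \<pi> a \<circ> T)"

definition linearly_minimal ::
  "('f::field \<Rightarrow> 'w::ab_group_add \<Rightarrow> 'w) \<Rightarrow> ('a \<Rightarrow> 'w \<Rightarrow> 'w) \<Rightarrow> ('v \<Rightarrow> 'w) \<Rightarrow> bool" where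
  "linearly_minimal sW \<pi> T \<longleftrightarrow> module.span sW {\<pi> a (T v) | a v. True} = UNIV"

(* The canonical dilation.  L(A,V) is represented inside the space of all
   functions 'a => 'v with pointwise operations. *)
definition fun_scale :: "('f \<Rightarrow> 'v \<Rightarrow> 'v) \<Rightarrow> 'f \<Rightarrow> ('a \<Rightarrow> 'v) \<Rightarrow> ('a \<Rightarrow> 'v)" where
  "fun_scale sV c f = (\<lambda>b. sV c (f b))"

definition alpha :: "('a::ring_1 \<Rightarrow> 'v \<Rightarrow> 'v) \<Rightarrow> 'a \<Rightarrow> 'v \<Rightarrow> ('a \<Rightarrow> 'v)" where
  "alpha \<phi> a x = (\<lambda>b. \<phi> (b * a) x)"

definition W_c :: "('f::field \<Rightarrow> 'v::ab_group_add \<Rightarrow> 'v) \<Rightarrow> ('a::ring_1 \<Rightarrow> 'v \<Rightarrow> 'v) \<Rightarrow> ('a \<Rightarrow> 'v) set" where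
  "W_c sV \<phi> = module.span (fun_scale sV) {alpha \<phi> a x | a x. True}"

(* pi_c(a) alpha_{b,x} = alpha_{ab,x}; on W_c this is f |-> (c |-> f (c * a)) *)
definition pi_c :: "'a::ring_1 \<Rightarrow> ('a \<Rightarrow> 'v) \<Rightarrow> ('a \<Rightarrow> 'v)" where
  "pi_c a f = (\<lambda>c. f (c * a))"

definition T_c :: "('a::ring_1 \<Rightarrow> 'v \<Rightarrow> 'v) \<Rightarrow> 'v \<Rightarrow> ('a \<Rightarrow> 'v)" where
  "T_c \<phi> x = alpha \<phi> 1 x"

(* S_c alpha_{a,x} = phi(a) x = alpha_{a,x}(I); on W_c this is f |-> f I *)
definition S_c :: "('a::ring_1 \<Rightarrow> 'v) \<Rightarrow> 'v" where
  "S_c f = f 1"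

definition equivalent_to_canonical ::
  "('f::field \<Rightarrow> 'v::ab_group_add \<Rightarrow> 'v) \<Rightarrow> ('a::ring_1 \<Rightarrow> 'v \<Rightarrow> 'v)
   \<Rightarrow> ('f \<Rightarrow> 'w::ab_group_add \<Rightarrow> 'w) \<Rightarrow> ('a \<Rightarrow> 'w \<Rightarrow> 'w) \<Rightarrow> ('w \<Rightarrow> 'v) \<Rightarrow> ('v \<Rightarrow> 'w) \<Rightarrow> bool" where
  "equivalent_to_canonical sV \<phi> sW \<pi> S T \<longleftrightarrow>
     (\<exists>R. Vector_Spaces.linear sW (fun_scale sV) R \<and> bij_betw R UNIV (W_c sV \<phi>) \<and>
          (\<forall>v. R (T v) = T_c \<phi> v) \<and>
          (\<forall>w. S_c (R w) = S w) \<and>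
          (\<forall>a w. \<pi> a w = inv_into UNIV R (pi_c a (R w))))"

definition rep_equivalent_to_canonical ::
  "('f::field \<Rightarrow> 'v::ab_group_add \<Rightarrow> 'v) \<Rightarrow> ('a::ring_1 \<Rightarrow> 'v \<Rightarrow> 'v)
   \<Rightarrow> ('f \<Rightarrow> 'w::ab_group_add \<Rightarrow> 'w) \<Rightarrow> ('a \<Rightarrow> 'w \<Rightarrow> 'w) \<Rightarrow> bool" where
  "rep_equivalent_to_canonical sV \<phi> sW \<pi> \<longleftrightarrow>
     (\<exists>R. Vector_Spaces.linear sW (fun_scale sV) R \<and> bij_betw R UNIV (W_c sV \<phi>) \<and>
          (\<forall>a w. pi_c a (R w) = R (\<pi> a w)))"

definition no_invariant_subspace_in_kernel ::
  "('f::field \<Rightarrow> 'w::ab_group_add \<Rightarrow> 'w) \<Rightarrow> ('a \<Rightarrow> 'w \<Rightarrow> 'w) \<Rightarrow> ('w \<Rightarrow> 'v::zero) \<Rightarrow> bool" where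
  "no_invariant_subspace_in_kernel sW \<pi> S \<longleftrightarrow>
     (\<forall>U. module.subspace sW U \<and> U \<subseteq> {w. S w = 0} \<and> (\<forall>a. \<pi> a ` U \<subseteq> U) \<longrightarrow> U = {0})"

end

theory Submission
  imports Defs
begin

text \<open>
  Every dilation \<open>(\<pi>, S, T, W)\<close> comes with the map \<open>Q w = (b \<mapsto> S (\<pi> b w))\<close> into \<open>L(\<A>, V)\<close>.
  It intertwines \<open>\<pi>\<close> with \<open>\<pi>\<^sub>c\<close>, sends \<open>\<pi>(a) T x\<close> to \<open>\<alpha>\<^sub>a\<^sub>,\<^sub>x\<close> (so by minimality it maps \<open>W\<close>
  onto \<open>W\<^sub>c\<close>), and its kernel is the largest \<open>\<pi>(\<A>)\<close>-invariant subspace of \<open>ker S\<close>.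
  Hence \<open>ker S\<close> contains no nonzero invariant subspace iff \<open>Q\<close> is injective, i.e. iff \<open>Q\<close> is an
  equivalence with the canonical dilation. If \<open>W\<close> is finite-dimensional and isomorphic to \<open>W\<^sub>c\<close>,
  the surjection \<open>Q : W \<rightarrow> W\<^sub>c\<close> is injective by counting dimensions.
\<close>

lemma vector_space_fun_scale:
  assumes "vector_space sV"
  shows "vector_space (fun_scale sV :: 'f::field \<Rightarrow> ('a \<Rightarrow> 'v::ab_group_add) \<Rightarrow> _)"
proof -
  interpret V: vector_space sV by fact
  show ?thesis
    by unfold_locales
      (auto simp: fun_scale_def fun_eq_iff V.scale_right_distrib V.scale_left_distrib)
qed

lemma (in finite_dimensional_vector_space) linear_inj_if_range_eq_range_inj:
  assumes Q: "Vector_Spaces.linear scale t Q"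
    and R: "Vector_Spaces.linear scale t R" "inj R"
    and range_eq: "range Q = range R"
  shows "inj Q"
proof -
  interpret vector_space_pair scale t
    using Q by (simp add: vector_space_pair_def Vector_Spaces.linear_def)
  obtain g where g: "Vector_Spaces.linear t scale g" "g \<circ> R = id"
    using linear_injective_left_inverse[OF R] by blast
  have "range (g \<circ> Q) = range (g \<circ> R)"
    by (metis image_comp range_eq)
  then have "surj (g \<circ> Q)"
    by (simp add: g(2))
  then have "inj (g \<circ> Q)"
    using linear_surj_imp_inj Vector_Spaces.linear_compose[OF Q g(1)] by blast
  then show ?thesis
    by (rule inj_on_imageI2)
qed

locale hom_dilation =
  fixes sA :: "'f::field \<Rightarrow> 'a::ring_1 \<Rightarrow> 'a"
    and sV :: "'f \<Rightarrow> 'v::ab_group_add \<Rightarrow> 'v"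
    and \<phi> :: "'a \<Rightarrow> 'v \<Rightarrow> 'v"
    and sW :: "'f \<Rightarrow> 'w::ab_group_add \<Rightarrow> 'w"
    and \<pi> :: "'a \<Rightarrow> 'w \<Rightarrow> 'w"
    and S :: "'w \<Rightarrow> 'v"
    and T :: "'v \<Rightarrow> 'w"
  assumes dilation: "hom_dilation_system sA sV \<phi> sW \<pi> S T"
begin

lemma vector_space_W: "vector_space sW"
  and vector_space_fun_space: "vector_space (fun_scale sV :: 'f \<Rightarrow> ('a \<Rightarrow> 'v) \<Rightarrow> _)"
  and linear_\<pi>: "Vector_Spaces.linear sW sW (\<pi> a)"
  and \<pi>_mult: "\<pi> (a * b) = \<pi> a \<circ> \<pi> b"
  and \<pi>_1: "\<pi> 1 = id"
  and linear_S: "Vector_Spaces.linear sW sV S"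
  and \<phi>_eq: "\<phi> a = S \<circ> \<pi> a \<circ> T"
  using dilation vector_space_fun_scale
  by (auto simp: hom_dilation_system_def linear_system_def)

definition canonical_map :: "'w \<Rightarrow> 'a \<Rightarrow> 'v" where
  "canonical_map w = (\<lambda>b. S (\<pi> b w))"

lemma linear_canonical_map: "Vector_Spaces.linear sW (fun_scale sV) canonical_map"
  unfolding Vector_Spaces.linear_iff
proof (intro conjI allI)
  fix x y
  show "canonical_map (x + y) = canonical_map x + canonical_map y"
    using linear_\<pi> linear_S
    by (auto simp: canonical_map_def fun_eq_iff Vector_Spaces.linear_iff)
next
  fix c x
  show "canonical_map (sW c x) = fun_scale sV c (canonical_map x)"
    using linear_\<pi> linear_S
    by (auto simp: canonical_map_def fun_eq_iff Vector_Spaces.linear_iff fun_scale_def)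
qed (fact vector_space_W vector_space_fun_space)+

interpretation Q: Vector_Spaces.linear sW "fun_scale sV" canonical_map
  by (rule linear_canonical_map)

lemma canonical_map_intertwines: "canonical_map (\<pi> a w) = pi_c a (canonical_map w)"
  by (simp add: canonical_map_def pi_c_def \<pi>_mult)

lemma canonical_map_generator: "canonical_map (\<pi> a (T x)) = alpha \<phi> a x"
  by (simp add: canonical_map_def alpha_def fun_eq_iff \<pi>_mult \<phi>_eq)

lemma canonical_map_T: "canonical_map (T x) = T_c \<phi> x"
  using canonical_map_generator[of 1 x] by (simp add: \<pi>_1 T_c_def)

lemma S_c_canonical_map: "S_c (canonical_map w) = S w"
  by (simp add: S_c_def canonical_map_def \<pi>_1)

lemma range_canonical_map:
  assumes "linearly_minimal sW \<pi> T"
  shows "range canonical_map = W_c sV \<phi>"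
proof -
  have "{\<pi> a (T x) | a x. True} = (\<lambda>(a, x). \<pi> a (T x)) ` UNIV"
    and "{alpha \<phi> a x | a x. True} = (\<lambda>(a, x). alpha \<phi> a x) ` UNIV"
    by auto
  then have generators: "canonical_map ` {\<pi> a (T x) | a x. True} = {alpha \<phi> a x | a x. True}"
    by (simp add: image_image canonical_map_generator split_def)
  have "range canonical_map = canonical_map ` module.span sW {\<pi> a (T x) | a x. True}"
    using assms by (simp add: linearly_minimal_def)
  also have "\<dots> = module.span (fun_scale sV) (canonical_map ` {\<pi> a (T x) | a x. True})"
    by (rule Q.span_image[symmetric])
  finally show ?thesis
    unfolding generators W_c_def .
qed

lemma invariant_subset_kernel_canonical_map:
  assumes "U \<subseteq> {w. S w = 0}" and "\<forall>a. \<pi> a ` U \<subseteq> U"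
  shows "U \<subseteq> {w. canonical_map w = 0}"
  using assms by (auto simp: canonical_map_def fun_eq_iff)

lemma kernel_canonical_map_invariant: "\<pi> a ` {w. canonical_map w = 0} \<subseteq> {w. canonical_map w = 0}"
  by (auto simp: canonical_map_intertwines pi_c_def)

lemma no_invariant_subspace_in_kernel_iff_inj:
  "no_invariant_subspace_in_kernel sW \<pi> S \<longleftrightarrow> inj canonical_map"
proof
  assume no_invariant: "no_invariant_subspace_in_kernel sW \<pi> S"
  have "S w = 0" if "canonical_map w = 0" for w
    using S_c_canonical_map[of w] that by (simp add: S_c_def zero_fun_def)
  then have "{w. canonical_map w = 0} \<subseteq> {w. S w = 0}"
    by blast
  then have "{w. canonical_map w = 0} = {0}"
    using no_invariant Q.subspace_kernel kernel_canonical_map_invariant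
    by (simp add: no_invariant_subspace_in_kernel_def)
  then show "inj canonical_map"
    using Q.inj_iff_eq_0 by blast
next
  assume "inj canonical_map"
  then have "U = {0}"
    if "module.subspace sW U" "U \<subseteq> {w. S w = 0}" "\<forall>a. \<pi> a ` U \<subseteq> U" for U
    using that invariant_subset_kernel_canonical_map[of U] Q.inj_iff_eq_0 Q.vs1.subspace_0
    by blast
  then show "no_invariant_subspace_in_kernel sW \<pi> S"
    by (auto simp: no_invariant_subspace_in_kernel_def)
qed

lemma equivalent_to_canonical_if_inj:
  assumes "linearly_minimal sW \<pi> T" and "inj canonical_map"
  shows "equivalent_to_canonical sV \<phi> sW \<pi> S T"
  unfolding equivalent_to_canonical_def
proof (intro exI conjI allI)
  show "bij_betw canonical_map UNIV (W_c sV \<phi>)"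
    using assms range_canonical_map by (simp add: bij_betw_def)
  show "\<pi> a w = inv_into UNIV canonical_map (pi_c a (canonical_map w))" for a w
    using assms(2) by (simp flip: canonical_map_intertwines)
qed (simp_all add: linear_canonical_map canonical_map_T S_c_canonical_map)

lemma inj_canonical_map_if_rep_equivalent:
  assumes "linearly_minimal sW \<pi> T"
    and "finite_dimensional_vector_space sW B"
    and "rep_equivalent_to_canonical sV \<phi> sW \<pi>"
  shows "inj canonical_map"
proof -
  obtain R where R: "Vector_Spaces.linear sW (fun_scale sV) R" "bij_betw R UNIV (W_c sV \<phi>)"
    using assms(3) unfolding rep_equivalent_to_canonical_def by blast
  show ?thesis
    using finite_dimensional_vector_space.linear_inj_if_range_eq_range_inj[OF assms(2)
        linear_canonical_map R(1)] R(2) range_canonical_map[OF assms(1)]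
    by (simp add: bij_betw_def)
qed

end

theorem corollary3p5:
  fixes sA :: "'f::field \<Rightarrow> 'a::ring_1 \<Rightarrow> 'a"
    and sV :: "'f \<Rightarrow> 'v::ab_group_add \<Rightarrow> 'v"
    and sW :: "'f \<Rightarrow> 'w::ab_group_add \<Rightarrow> 'w"
    and \<phi> :: "'a \<Rightarrow> 'v \<Rightarrow> 'v"
    and \<pi>1 :: "'a \<Rightarrow> 'w \<Rightarrow> 'w"
    and S1 :: "'w \<Rightarrow> 'v"
    and T1 :: "'v \<Rightarrow> 'w"
  assumes "hom_dilation_system sA sV \<phi> sW \<pi>1 S1 T1"
    and "linearly_minimal sW \<pi>1 T1"
  shows "(no_invariant_subspace_in_kernel sW \<pi>1 S1 \<longrightarrow>
            equivalent_to_canonical sV \<phi> sW \<pi>1 S1 T1)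
       \<and> ((\<exists>B. finite_dimensional_vector_space sW B) \<and>
            rep_equivalent_to_canonical sV \<phi> sW \<pi>1 \<longrightarrow>
            no_invariant_subspace_in_kernel sW \<pi>1 S1)"
proof -
  interpret hom_dilation sA sV \<phi> sW \<pi>1 S1 T1
    using assms(1) by unfold_locales
  show ?thesis
    using assms(2) no_invariant_subspace_in_kernel_iff_inj equivalent_to_canonical_if_inj
      inj_canonical_map_if_rep_equivalent by blast
qed

end
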